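(* Let $A \in \mathbb{R}^{m \times n}$, $B \in \mathbb{R}^{n \times m}$, and $p := \min\{m,n\}$. Then there exist matrices $V \in \mathbb{R}^{m \times p}$ and $U \in \mathbb{R}^{n \times p}$ with orthonormal columns (i.e. $V^T V = U^T U = I_p$), and upper Hessenberg matrices $H \in \mathbb{R}^{p \times p}$ and $F \in \mathbb{R}^{p \times p}$ whose subdiagonal entries are all nonnegative, such that \[ V^T A U = H \quad\text{and}\quad U^T B V = F. \]
   Context: A square matrix $H=(h_{i,j})$ is upper Hessenberg if $h_{i,j}=0$ whenever $i > j+1$; its subdiagonal entries are $h_{j+1,j}$. *)

theory Defs
  imports "Jordan_Normal_Form.Matrix"
begin

definition upper_hessenberg :: "'a::zero mat \<Rightarrow> bool" where
  "upper_hessenberg H \<longleftrightarrow> square_mat H \<and>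
     (\<forall>i < dim_row H. \<forall>j < dim_col H. i > j + 1 \<longrightarrow> H $$ (i, j) = 0)"

definition nonneg_subdiag :: "'a::{zero,ord} mat \<Rightarrow> bool" where
  "nonneg_subdiag H \<longleftrightarrow> (\<forall>j. j + 1 < dim_row H \<longrightarrow> H $$ (j + 1, j) \<ge> 0)"

end

theory Submission
  imports Defs "Jordan_Normal_Form.Determinant"
begin

text \<open>Two-sided Arnoldi process. Orthonormal vectors \<open>v\<^sub>0, \<dots>, v\<^sub>p\<^sub>-\<^sub>1\<close> in \<open>\<real>\<^sup>m\<close> and
  \<open>u\<^sub>0, \<dots>, u\<^sub>p\<^sub>-\<^sub>1\<close> in \<open>\<real>\<^sup>n\<close> are built one pair at a time: \<open>v\<^sub>k\<close> is a unit vector orthogonal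
  to \<open>v\<^sub>0, \<dots>, v\<^sub>k\<^sub>-\<^sub>1\<close> such that \<open>A u\<^sub>k\<^sub>-\<^sub>1\<close> lies in the span of \<open>v\<^sub>0, \<dots>, v\<^sub>k\<close> with a
  nonnegative coefficient on \<open>v\<^sub>k\<close> (the normalised Gram--Schmidt residual of \<open>A u\<^sub>k\<^sub>-\<^sub>1\<close>,
  or any admissible unit vector if that residual vanishes, which exists as long as
  \<open>k < m\<close>), and symmetrically \<open>u\<^sub>k\<close> for \<open>B v\<^sub>k\<^sub>-\<^sub>1\<close>. Since \<open>(V\<^sup>T A U)\<^sub>i\<^sub>j = v\<^sub>i \<bullet> A u\<^sub>j\<close>, this
  entry vanishes for \<open>i > j + 1\<close> and is nonnegative for \<open>i = j + 1\<close>; likewise for \<open>U\<^sup>T B V\<close>.\<close>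

definition orthonormal :: "nat \<Rightarrow> real vec list \<Rightarrow> bool" where
  "orthonormal m vs \<longleftrightarrow> set vs \<subseteq> carrier_vec m \<and>
     (\<forall>i<length vs. \<forall>j<length vs. vs ! i \<bullet> vs ! j = (if i = j then 1 else 0))"

fun orth_proj :: "nat \<Rightarrow> real vec list \<Rightarrow> real vec \<Rightarrow> real vec" where
  "orth_proj m [] w = 0\<^sub>v m"
| "orth_proj m (v # vs) w = (v \<bullet> w) \<cdot>\<^sub>v v + orth_proj m vs w"

text \<open>For orthonormal \<open>vs\<close> this says \<open>w \<in> span vs\<close>; phrasing it through the orthogonal
  complement avoids any theory of spans.\<close>
definition in_perp_perp :: "nat \<Rightarrow> real vec list \<Rightarrow> real vec \<Rightarrow> bool" where
  "in_perp_perp m vs w \<longleftrightarrow> (\<forall>y\<in>carrier_vec m. (\<forall>v\<in>set vs. y \<bullet> v = 0) \<longrightarrow> y \<bullet> w = 0)"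

definition hessenberg_basis :: "real mat \<Rightarrow> nat \<Rightarrow> real vec list \<Rightarrow> real vec list \<Rightarrow> bool" where
  "hessenberg_basis A m vs us \<longleftrightarrow> orthonormal m vs \<and>
     (\<forall>j. Suc j < length vs \<longrightarrow>
        in_perp_perp m (take (Suc (Suc j)) vs) (A *\<^sub>v us ! j) \<and> 0 \<le> vs ! Suc j \<bullet> (A *\<^sub>v us ! j))"

lemma orthonormal_carrier: "orthonormal m vs \<Longrightarrow> v \<in> set vs \<Longrightarrow> v \<in> carrier_vec m"
  unfolding orthonormal_def by auto

lemma orthonormal_Cons:
  assumes "orthonormal m (v # vs)"
  shows "orthonormal m vs" and "v \<bullet> v = 1" and "\<forall>u\<in>set vs. v \<bullet> u = 0"
proof -
  have "vs ! i \<bullet> vs ! j = (if i = j then 1 else 0)" if "i < length vs" "j < length vs" for i j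
  proof -
    have "(v # vs) ! Suc i \<bullet> (v # vs) ! Suc j = (if Suc i = Suc j then 1 else 0)"
      using assms that unfolding orthonormal_def by (metis Suc_less_eq length_Cons)
    then show ?thesis by simp
  qed
  then show "orthonormal m vs"
    using assms unfolding orthonormal_def by auto
  show "v \<bullet> v = 1"
    using assms unfolding orthonormal_def by force
  show "\<forall>u\<in>set vs. v \<bullet> u = 0"
  proof
    fix u assume "u \<in> set vs"
    then obtain j where "j < length vs" "vs ! j = u" by (meson in_set_conv_nth)
    then show "v \<bullet> u = 0"
      using assms unfolding orthonormal_def by (metis Suc_less_eq length_Cons nat.simps(3)
          nth_Cons_0 nth_Cons_Suc zero_less_Suc)
  qed
qed

lemma orthonormal_snoc:
  assumes vs: "orthonormal m vs" and x: "x \<in> carrier_vec m" "x \<bullet> x = 1"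
    and x_perp: "\<forall>v\<in>set vs. x \<bullet> v = 0"
  shows "orthonormal m (vs @ [x])"
proof -
  have "vs ! l \<bullet> x = 0" "x \<bullet> vs ! l = 0" if "l < length vs" for l
    using that x_perp comm_scalar_prod[OF x(1) orthonormal_carrier[OF vs]] by auto
  then show ?thesis
    using vs x unfolding orthonormal_def
    by (auto simp: nth_append less_Suc_eq)
qed

lemma orth_proj_carrier: "set vs \<subseteq> carrier_vec m \<Longrightarrow> orth_proj m vs w \<in> carrier_vec m"
  by (induction vs) auto

lemma orth_proj_perp:
  assumes "y \<in> carrier_vec m" "set vs \<subseteq> carrier_vec m" "\<forall>v\<in>set vs. y \<bullet> v = 0"
  shows "y \<bullet> orth_proj m vs w = 0"
  using assms
proof (induction vs)
  case (Cons v vs)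
  then have "v \<in> carrier_vec m" "orth_proj m vs w \<in> carrier_vec m"
    using orth_proj_carrier by auto
  with Cons show ?case
    by (simp add: scalar_prod_add_distrib[OF Cons.prems(1)])
qed simp

lemma orth_proj_coeff:
  assumes "orthonormal m vs" "v \<in> set vs" "w \<in> carrier_vec m"
  shows "v \<bullet> orth_proj m vs w = v \<bullet> w"
  using assms
proof (induction vs)
  case (Cons u vs)
  note u = orthonormal_Cons[OF Cons.prems(1)]
  have carrier: "u \<in> carrier_vec m" "v \<in> carrier_vec m" "set vs \<subseteq> carrier_vec m"
    using Cons.prems orthonormal_carrier by auto
  then have expand: "v \<bullet> orth_proj m (u # vs) w = (u \<bullet> w) * (v \<bullet> u) + v \<bullet> orth_proj m vs w"
    by (simp add: scalar_prod_add_distrib[OF carrier(2)] orth_proj_carrier)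
  show ?case
  proof (cases "v = u")
    case True
    then show ?thesis
      using expand u orth_proj_perp[OF carrier(1,3)] by simp
  next
    case False
    then have "v \<in> set vs" using Cons.prems(2) by simp
    moreover have "v \<bullet> u = 0"
      using u(3) \<open>v \<in> set vs\<close> comm_scalar_prod[OF carrier(1,2)] by simp
    ultimately show ?thesis
      using expand Cons.IH[OF u(1) _ Cons.prems(3)] by simp
  qed
qed simp

lemma orth_proj_residual_perp:
  assumes "orthonormal m vs" "v \<in> set vs" "w \<in> carrier_vec m"
  shows "(w - orth_proj m vs w) \<bullet> v = 0"
proof -
  have carrier: "v \<in> carrier_vec m" "orth_proj m vs w \<in> carrier_vec m"
    using assms orthonormal_carrier orth_proj_carrier unfolding orthonormal_def by auto
  have "v \<bullet> (w - orth_proj m vs w) = 0"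
    using scalar_prod_minus_distrib[OF carrier(1) assms(3) carrier(2)] orth_proj_coeff[OF assms]
    by simp
  then show ?thesis
    using comm_scalar_prod[OF carrier(1), of "w - orth_proj m vs w"] carrier assms(3) by simp
qed

text \<open>Fewer than \<open>m\<close> vectors: padding them with zero rows to an \<open>m \<times> m\<close> matrix gives
  a singular matrix, whose kernel supplies the vector.\<close>
lemma exists_nonzero_perp:
  fixes vs :: "'a :: idom vec list"
  assumes "set vs \<subseteq> carrier_vec m" "length vs < m"
  shows "\<exists>z \<in> carrier_vec m. z \<noteq> 0\<^sub>v m \<and> (\<forall>v\<in>set vs. z \<bullet> v = 0)"
proof -
  define c where "c = (\<lambda>i. if i < length vs then vs ! i else 0\<^sub>v m)"
  define M where "M = mat\<^sub>r m m (\<lambda>i. if i = m - 1 then 0\<^sub>v m else c i)"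
  have c: "c \<in> {0..<m} \<rightarrow> carrier_vec m" using assms(1) unfolding c_def by (auto simp: subset_iff)
  have M: "M \<in> carrier_mat m m" unfolding M_def by auto
  have "det M = 0" unfolding M_def by (rule det_row_0[OF _ c]) (use assms in auto)
  then obtain z where z: "z \<in> carrier_vec m" "z \<noteq> 0\<^sub>v m" "M *\<^sub>v z = 0\<^sub>v m"
    using det_0_iff_vec_prod_zero[OF M] by blast
  have "z \<bullet> v = 0" if "v \<in> set vs" for v
  proof -
    obtain i where i: "i < length vs" "vs ! i = v" using \<open>v \<in> set vs\<close> by (meson in_set_conv_nth)
    have "row M i = v"
      unfolding M_def using i assms c_def by (subst row_mat_of_row_fun) (auto simp: subset_iff)
    then have "v \<bullet> z = 0" using z(3) M i assms(2) by (metis index_mult_mat_vec index_zero_vec(1)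
          carrier_matD(1) less_trans)
    then show ?thesis
      using comm_scalar_prod[OF z(1), of v] assms(1) that by auto
  qed
  then show ?thesis using z by blast
qed

lemma exists_unit_rescaling:
  fixes z :: "real vec"
  assumes "z \<in> carrier_vec m" "z \<noteq> 0\<^sub>v m"
  obtains s where "0 < s" and "((1 / s) \<cdot>\<^sub>v z) \<bullet> ((1 / s) \<cdot>\<^sub>v z) = 1"
proof
  have zz: "0 < z \<bullet> z" using conjugate_square_greater_0_vec[OF assms(1)] assms(2) by simp
  then show "0 < sqrt (z \<bullet> z)" by simp
  show "((1 / sqrt (z \<bullet> z)) \<cdot>\<^sub>v z) \<bullet> ((1 / sqrt (z \<bullet> z)) \<cdot>\<^sub>v z) = 1"
    using assms(1) zz by (simp add: power2_eq_square[symmetric])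
qed

lemma exists_orthonormal_extension:
  assumes vs: "orthonormal m vs" and len: "length vs < m" and w: "w \<in> carrier_vec m"
  obtains x where "orthonormal m (vs @ [x])" and "in_perp_perp m (vs @ [x]) w" and "0 \<le> x \<bullet> w"
proof -
  have vs_carrier: "set vs \<subseteq> carrier_vec m" using vs unfolding orthonormal_def by auto
  define p where "p = orth_proj m vs w"
  define r where "r = w - p"
  have p: "p \<in> carrier_vec m" unfolding p_def using orth_proj_carrier[OF vs_carrier] .
  have r: "r \<in> carrier_vec m" and w_eq: "w = r + p" unfolding r_def using w p by auto
  have r_perp: "\<forall>v\<in>set vs. r \<bullet> v = 0"
    unfolding r_def p_def using orth_proj_residual_perp[OF vs _ w] by blast
  obtain z c where z: "z \<in> carrier_vec m" "z \<noteq> 0\<^sub>v m" "\<forall>v\<in>set vs. z \<bullet> v = 0"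
    and c: "0 \<le> c" "r = c \<cdot>\<^sub>v z"
  proof (cases "r = 0\<^sub>v m")
    case True
    obtain z where "z \<in> carrier_vec m" "z \<noteq> 0\<^sub>v m" "\<forall>v\<in>set vs. z \<bullet> v = 0"
      using exists_nonzero_perp[OF vs_carrier len] by blast
    moreover have "r = 0 \<cdot>\<^sub>v z" using True \<open>z \<in> carrier_vec m\<close> by auto
    ultimately show ?thesis using that[of z 0] by simp
  next
    case False
    then show ?thesis using that[OF r False r_perp, of 1] r by simp
  qed
  obtain s where s: "0 < s" and x_unit: "((1 / s) \<cdot>\<^sub>v z) \<bullet> ((1 / s) \<cdot>\<^sub>v z) = 1"
    using exists_unit_rescaling[OF z(1,2)] .
  define x where "x = (1 / s) \<cdot>\<^sub>v z"
  have x: "x \<in> carrier_vec m" "x \<bullet> x = 1" "\<forall>v\<in>set vs. x \<bullet> v = 0"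
    unfolding x_def using z x_unit vs_carrier by auto
  have r_x: "r = (c * s) \<cdot>\<^sub>v x" unfolding x_def c(2) using s by (auto simp: smult_smult_assoc)
  have w_perp: "y \<bullet> w = (c * s) * (y \<bullet> x)" if "y \<in> carrier_vec m" "\<forall>v\<in>set vs. y \<bullet> v = 0" for y
  proof -
    have "y \<bullet> p = 0" unfolding p_def using orth_proj_perp[OF that(1) vs_carrier] that(2) .
    then show ?thesis
      using that(1) x(1) p r unfolding w_eq r_x by (simp add: scalar_prod_add_distrib)
  qed
  show thesis
  proof
    show "orthonormal m (vs @ [x])" using orthonormal_snoc[OF vs x] .
    show "in_perp_perp m (vs @ [x]) w" unfolding in_perp_perp_def using w_perp by simp
    show "0 \<le> x \<bullet> w" using w_perp[OF x(1,3)] x(2) c(1) s by simp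
  qed
qed

lemma hessenberg_basis_snoc:
  assumes H: "hessenberg_basis A m vs us" and A: "A \<in> carrier_mat m n" and len: "length vs < m"
  obtains x where "hessenberg_basis A m (vs @ [x]) us"
proof -
  define w where "w = (if vs = [] then 0\<^sub>v m else A *\<^sub>v us ! (length vs - 1))"
  have w: "w \<in> carrier_vec m" unfolding w_def using A by (auto intro!: carrier_vecI)
  have vs: "orthonormal m vs" using H unfolding hessenberg_basis_def by simp
  obtain x where x: "orthonormal m (vs @ [x])" "in_perp_perp m (vs @ [x]) w" "0 \<le> x \<bullet> w"
    using exists_orthonormal_extension[OF vs len w] .
  have "in_perp_perp m (take (Suc (Suc j)) (vs @ [x])) (A *\<^sub>v us ! j) \<and>
      0 \<le> (vs @ [x]) ! Suc j \<bullet> (A *\<^sub>v us ! j)" if j: "Suc j < length (vs @ [x])" for j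
  proof (cases "Suc j < length vs")
    case True
    then show ?thesis using H unfolding hessenberg_basis_def by (simp add: nth_append)
  next
    case False
    then have last: "Suc j = length vs" using j by simp
    then have "w = A *\<^sub>v us ! j" "take (Suc (Suc j)) (vs @ [x]) = vs @ [x]" "(vs @ [x]) ! Suc j = x"
      unfolding w_def using last[symmetric] by (auto simp: nth_append)
    then show ?thesis using x(2,3) by simp
  qed
  then show thesis using that x(1) unfolding hessenberg_basis_def by blast
qed

lemma hessenberg_basis_append_right:
  assumes "hessenberg_basis A m vs us" "length vs \<le> Suc (length us)"
  shows "hessenberg_basis A m vs (us @ zs)"
  using assms unfolding hessenberg_basis_def by (simp add: nth_append)

lemma exists_hessenberg_bases:
  assumes A: "A \<in> carrier_mat m n" and B: "B \<in> carrier_mat n m"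
  shows "k \<le> min m n \<Longrightarrow> \<exists>vs us. length vs = k \<and> length us = k \<and>
    hessenberg_basis A m vs us \<and> hessenberg_basis B n us vs"
proof (induction k)
  case 0
  show ?case by (auto simp: hessenberg_basis_def orthonormal_def)
next
  case (Suc k)
  then obtain vs us where len: "length vs = k" "length us = k"
    and H: "hessenberg_basis A m vs us" and F: "hessenberg_basis B n us vs" by auto
  obtain x where x: "hessenberg_basis A m (vs @ [x]) us"
    using hessenberg_basis_snoc[OF H A] len Suc.prems by auto
  obtain z where z: "hessenberg_basis B n (us @ [z]) vs"
    using hessenberg_basis_snoc[OF F B] len Suc.prems by auto
  have "hessenberg_basis A m (vs @ [x]) (us @ [z])" "hessenberg_basis B n (us @ [z]) (vs @ [x])"
    using hessenberg_basis_append_right x z len by auto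
  then show ?case using len by (metis length_append_singleton)
qed

lemma transpose_mat_of_cols_mult_index:
  assumes A: "A \<in> carrier_mat m n" and vs: "set vs \<subseteq> carrier_vec m" and us: "set us \<subseteq> carrier_vec n"
    and i: "i < length vs" and j: "j < length us"
  shows "(transpose_mat (mat_of_cols m vs) * A * mat_of_cols n us) $$ (i, j) = vs ! i \<bullet> (A *\<^sub>v us ! j)"
proof -
  have "transpose_mat (mat_of_cols m vs) * A * mat_of_cols n us
      = transpose_mat (mat_of_cols m vs) * (A * mat_of_cols n us)"
    by (rule assoc_mult_mat[OF _ A]) auto
  also have "\<dots> $$ (i, j) = vs ! i \<bullet> (A *\<^sub>v us ! j)"
    using i j A vs us col_mult2[OF A mat_of_cols_carrier(1)[of n us] j] nth_mem[OF j]
    by (subst index_mult_mat) (auto simp: subset_iff)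
  finally show ?thesis .
qed

lemma orthonormal_gram_mat:
  "orthonormal m vs \<Longrightarrow> transpose_mat (mat_of_cols m vs) * mat_of_cols m vs = 1\<^sub>m (length vs)"
  unfolding orthonormal_def by (intro eq_matI) (auto simp: subset_iff)

lemma hessenberg_basis_compression:
  assumes A: "A \<in> carrier_mat m n" and H: "hessenberg_basis A m vs us" and us: "orthonormal n us"
    and len: "length vs = length us"
  defines "C \<equiv> transpose_mat (mat_of_cols m vs) * A * mat_of_cols n us"
  shows "upper_hessenberg C" and "nonneg_subdiag C"
proof -
  have vs: "orthonormal m vs" using H unfolding hessenberg_basis_def by simp
  have carrier: "set vs \<subseteq> carrier_vec m" "set us \<subseteq> carrier_vec n"
    using vs us unfolding orthonormal_def by auto
  have C: "C \<in> carrier_mat (length vs) (length vs)" unfolding C_def carrier_mat_def using len by simp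
  have C_index: "C $$ (i, j) = vs ! i \<bullet> (A *\<^sub>v us ! j)" if "i < length vs" "j < length vs" for i j
    unfolding C_def using transpose_mat_of_cols_mult_index[OF A carrier] that len by simp
  have "C $$ (i, j) = 0" if ij: "i < length vs" "j + 1 < i" for i j
  proof -
    have "vs ! i \<bullet> v = 0" if "v \<in> set (take (Suc (Suc j)) vs)" for v
      using that ij vs unfolding orthonormal_def by (auto simp: in_set_conv_nth)
    moreover have "in_perp_perp m (take (Suc (Suc j)) vs) (A *\<^sub>v us ! j)"
      using H ij unfolding hessenberg_basis_def by simp
    ultimately have "vs ! i \<bullet> (A *\<^sub>v us ! j) = 0"
      using carrier(1) ij(1) unfolding in_perp_perp_def by (meson nth_mem subsetD)
    then show ?thesis using C_index ij by simp
  qed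
  then show "upper_hessenberg C" unfolding upper_hessenberg_def using C by auto
  show "nonneg_subdiag C"
    unfolding nonneg_subdiag_def using C C_index H unfolding hessenberg_basis_def by auto
qed

theorem theorem2p1:
  fixes A B :: "real mat" and m n :: nat
  assumes "A \<in> carrier_mat m n" and "B \<in> carrier_mat n m"
  shows "\<exists>V U H F.
     V \<in> carrier_mat m (min m n) \<and> U \<in> carrier_mat n (min m n) \<and>
     H \<in> carrier_mat (min m n) (min m n) \<and> F \<in> carrier_mat (min m n) (min m n) \<and>
     transpose_mat V * V = 1\<^sub>m (min m n) \<and> transpose_mat U * U = 1\<^sub>m (min m n) \<and>
     upper_hessenberg H \<and> upper_hessenberg F \<and>
     nonneg_subdiag H \<and> nonneg_subdiag F \<and>
     transpose_mat V * A * U = H \<and> transpose_mat U * B * V = F"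
proof -
  obtain vs us where len: "length vs = min m n" "length us = min m n"
    and H: "hessenberg_basis A m vs us" and F: "hessenberg_basis B n us vs"
    using exists_hessenberg_bases[OF assms] by blast
  have vs: "orthonormal m vs" and us: "orthonormal n us"
    using H F unfolding hessenberg_basis_def by auto
  have "length vs = length us" using len by simp
  note hessenberg = hessenberg_basis_compression[OF assms(1) H us this]
    hessenberg_basis_compression[OF assms(2) F vs this[symmetric]]
  show ?thesis
    by (rule exI[of _ "mat_of_cols m vs"], rule exI[of _ "mat_of_cols n us"])
      (use hessenberg orthonormal_gram_mat[OF vs] orthonormal_gram_mat[OF us] len assms in auto)
qed

end
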